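(* Let $n\ge2$ and let $a,b$ be positive integers with $a<n-1$ and $b<n$. For all $l\in\mathcal{Q}_a$ and $r\in\mathcal{Q}_b$, $$\sum_{q\in\mathcal{Q}_n}\ \sum_{q'\in\mathcal{Q}_{n-1}}\mathbb{P}_q^{q'}\Big(\big\{(L_i,R_i)_{i=0}^{n-1}: L_a=l,\ R_{n-b-1}=r\big\}\Big)\ \le\ 12^{\,2n-b-a-1}.$$
   Context: $\mathcal{Q}_k$ denotes the set of rooted quadrangulations of the sphere with $k$ faces, with the convention that $\mathcal{Q}_0=\{\to\}$ consists of the rooted map with one edge and two vertices; $|\mathcal{Q}_k|=\frac{2\cdot 3^k(2k)!}{k!\,(k+2)!}$, so in particular $|\mathcal{Q}_{k+1}|\le 12|\mathcal{Q}_k|$ for all $k\ge0$. For each $k\ge1$, $g_k:\mathcal{Q}_k\times\mathcal{Q}_{k-1}\to\mathbb{R}_{\ge0}$ is a function such that $\sum_{q'\in\mathcal{Q}_{k-1}}g_k(q,q')=1$ for every $q\in\mathcal{Q}_k$ and $\sum_{q\in\mathcal{Q}_k}g_k(q,q')=|\mathcal{Q}_k|/|\mathcal{Q}_{k-1}|$ for every $q'\in\mathcal{Q}_{k-1}$ (and $g_k(q,q')=0$ unless $q'$ is obtained from $q$ by collapsing a face). For $q\in\mathcal{Q}_n$ and $q'\in\mathcal{Q}_{n-1}$, $\mathbb{P}_q^{q'}$ is the probability measure on the set of sequences $(L_i,R_i)_{i=0}^{n-1}$ with $L_i\in\mathcal{Q}_i$ and $R_i\in\mathcal{Q}_{n-1-i}$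 given by $$\mathbb{P}_q^{q'}\big((L_i,R_i)_{i=0}^{n-1}\big)=g_n(q,R_0)\,1_{L_{n-1}=q'}\prod_{i=0}^{n-2}g_{n-i-1}(R_i,R_{i+1})\,g_{i+1}(L_{i+1},L_i).$$ *)

theory Defs
  imports "HOL-Library.FuncSet" Complex_Main
begin

text \<open>Abstract setting: Q k plays the role of the set of rooted quadrangulations with k faces,
  g k q q' the transition weights.\<close>

definition seq_space :: "(nat \<Rightarrow> 'm set) \<Rightarrow> nat \<Rightarrow> ((nat \<Rightarrow> 'm) \<times> (nat \<Rightarrow> 'm)) set" where
  "seq_space Q n = (PiE {..<n} (\<lambda>i. Q i)) \<times> (PiE {..<n} (\<lambda>i. Q (n - 1 - i)))"

definition Pweight :: "(nat \<Rightarrow> 'm \<Rightarrow> 'm \<Rightarrow> real) \<Rightarrow> nat \<Rightarrow> 'm \<Rightarrow> 'm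
    \<Rightarrow> (nat \<Rightarrow> 'm) \<times> (nat \<Rightarrow> 'm) \<Rightarrow> real" where
  "Pweight g n q q' LR = (case LR of (L, R) \<Rightarrow>
     g n q (R 0) * (if L (n - 1) = q' then 1 else 0) *
     (\<Prod>i<n - 1. g (n - i - 1) (R i) (R (Suc i)) * g (Suc i) (L (Suc i)) (L i)))"

definition Pmeas :: "(nat \<Rightarrow> 'm set) \<Rightarrow> (nat \<Rightarrow> 'm \<Rightarrow> 'm \<Rightarrow> real) \<Rightarrow> nat \<Rightarrow> 'm \<Rightarrow> 'm
    \<Rightarrow> ((nat \<Rightarrow> 'm) \<times> (nat \<Rightarrow> 'm)) set \<Rightarrow> real" where
  "Pmeas Q g n q q' E = (\<Sum>LR \<in> seq_space Q n \<inter> E. Pweight g n q q' LR)"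

end

theory Submission
  imports Defs
begin

text \<open>Summing over q and q' decouples the weight into a factor for each chain: the q'-sum absorbs
  the indicator of L_{n-1} = q', and the q-sum is a column sum of g_n at R_0, giving
  |Q_n|/|Q_{n-1}|. A chain pinned at one index is then summed out from both ends towards the pin;
  on one side every step is a row sum of g (equal to 1), on the other a column sum (a ratio
  |Q_{k+1}|/|Q_k| \<le> 12). Exactly 1 + (n-b-1) + (n-1-a) column sums occur.\<close>

definition chain_weight :: "(nat \<Rightarrow> 'm \<Rightarrow> 'm \<Rightarrow> real) \<Rightarrow> nat \<Rightarrow> (nat \<Rightarrow> 'm) \<Rightarrow> real" where
  "chain_weight W N f = (\<Prod>i<N. W i (f i) (f (Suc i)))"

definition growth :: "(nat \<Rightarrow> 'm set) \<Rightarrow> nat \<Rightarrow> real" where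
  "growth Q k = real (card (Q (Suc k))) / real (card (Q k))"

lemma sum_PiE_lessThan_Suc:
  "sum h (PiE {..<Suc k} S) = (\<Sum>f\<in>PiE {..<k} S. \<Sum>y\<in>S k. h (f(k := y)))"
proof -
  have PiE_Suc: "PiE {..<Suc k} S = (\<lambda>(y, f). f(k := y)) ` (S k \<times> PiE {..<k} S)"
    by (simp add: lessThan_Suc PiE_insert_eq)
  have "sum h (PiE {..<Suc k} S) = sum (h \<circ> (\<lambda>(y, f). f(k := y))) (S k \<times> PiE {..<k} S)"
    unfolding PiE_Suc by (rule sum.reindex) (rule inj_combinator, simp)
  also have "\<dots> = (\<Sum>y\<in>S k. \<Sum>f\<in>PiE {..<k} S. h (f(k := y)))"
    by (simp add: sum.cartesian_product split_def comp_def)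
  also have "\<dots> = (\<Sum>f\<in>PiE {..<k} S. \<Sum>y\<in>S k. h (f(k := y)))"
    by (rule sum.swap)
  finally show ?thesis .
qed

lemma chain_weight_upd_Suc:
  "chain_weight W (Suc k) (f(Suc k := y)) = chain_weight W k f * W k (f k) y"
  by (simp add: chain_weight_def prod.lessThan_Suc)

lemma sum_chain_weight_pinned_last:
  assumes fin: "\<And>i. finite (S i)"
    and col: "\<And>i y. i < k \<Longrightarrow> y \<in> S (Suc i) \<Longrightarrow> (\<Sum>x\<in>S i. W i x y) = \<alpha> i"
    and y: "y \<in> S k"
  shows "(\<Sum>f\<in>PiE {..<Suc k} S. if f k = y then chain_weight W k f else 0) = (\<Prod>i<k. \<alpha> i)"
  using col y
proof (induction k arbitrary: y)
  case 0
  then show ?case by (simp add: sum_PiE_lessThan_Suc fin chain_weight_def)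
next
  case (Suc k)
  have "(\<Sum>f\<in>PiE {..<Suc (Suc k)} S. if f (Suc k) = y then chain_weight W (Suc k) f else 0)
      = (\<Sum>f\<in>PiE {..<Suc k} S. chain_weight W k f * W k (f k) y)"
    using Suc.prems by (simp add: sum_PiE_lessThan_Suc[of _ "Suc k"] chain_weight_upd_Suc fin)
  also have "\<dots> = (\<Sum>f\<in>PiE {..<Suc k} S. \<Sum>x\<in>S k. if f k = x then chain_weight W k f * W k x y else 0)"
    by (intro sum.cong refl) (simp add: fin PiE_mem)
  also have "\<dots> = (\<Sum>x\<in>S k. (\<Sum>f\<in>PiE {..<Suc k} S. if f k = x then chain_weight W k f else 0) * W k x y)"
    unfolding sum_distrib_right by (subst sum.swap) (intro sum.cong refl, simp)
  also have "\<dots> = (\<Sum>x\<in>S k. (\<Prod>i<k. \<alpha> i) * W k x y)"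
    using Suc.IH Suc.prems(1) by (intro sum.cong) auto
  also have "\<dots> = (\<Prod>i<Suc k. \<alpha> i)"
    by (simp add: sum_distrib_left [symmetric] Suc.prems)
  finally show ?case .
qed

lemma sum_chain_weight_pinned:
  assumes fin: "\<And>i. finite (S i)"
    and col: "\<And>i y. i < m \<Longrightarrow> y \<in> S (Suc i) \<Longrightarrow> (\<Sum>x\<in>S i. W i x y) = \<alpha> i"
    and row: "\<And>i x. m \<le> i \<Longrightarrow> i < N \<Longrightarrow> x \<in> S i \<Longrightarrow> (\<Sum>y\<in>S (Suc i). W i x y) = \<beta> i"
    and c: "c \<in> S m" and "m \<le> N"
  shows "(\<Sum>f\<in>PiE {..<Suc N} S. if f m = c then chain_weight W N f else 0)
          = (\<Prod>i<m. \<alpha> i) * (\<Prod>i\<in>{m..<N}. \<beta> i)"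
  using \<open>m \<le> N\<close> row
proof (induction N rule: dec_induct)
  case base
  then show ?case using sum_chain_weight_pinned_last[of S m W \<alpha> c, OF fin col c] by simp
next
  case (step N)
  define P where "P f = (if f m = c then chain_weight W N f else 0)" for f
  have "(\<Sum>f\<in>PiE {..<Suc (Suc N)} S. if f m = c then chain_weight W (Suc N) f else 0)
      = (\<Sum>f\<in>PiE {..<Suc N} S. P f * (\<Sum>y\<in>S (Suc N). W N (f N) y))"
    unfolding sum_PiE_lessThan_Suc[of _ "Suc N"] sum_distrib_left
    using step.hyps by (intro sum.cong refl) (simp add: chain_weight_upd_Suc P_def)
  also have "\<dots> = (\<Sum>f\<in>PiE {..<Suc N} S. P f) * \<beta> N"
    using step.prems step.hyps by (simp add: sum_distrib_right PiE_mem)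
  also have "\<dots> = (\<Prod>i<m. \<alpha> i) * (\<Prod>i\<in>{m..<Suc N}. \<beta> i)"
    using step.IH step.prems step.hyps by (simp add: P_def prod.atLeastLessThan_Suc)
  finally show ?case .
qed

lemma Pweight_eq_chain_weights:
  "Pweight g n q q' (L, R) = g n q (R 0) * (if L (n - 1) = q' then 1 else 0)
     * (chain_weight (\<lambda>i. g (n - i - 1)) (n - 1) R * chain_weight (\<lambda>i x y. g (Suc i) y x) (n - 1) L)"
  by (simp add: Pweight_def chain_weight_def prod.distrib)

locale transition_kernel =
  fixes Q :: "nat \<Rightarrow> 'm set" and g :: "nat \<Rightarrow> 'm \<Rightarrow> 'm \<Rightarrow> real"
  assumes finite_Q: "finite (Q k)"
    and row_sum: "k \<ge> 1 \<Longrightarrow> q \<in> Q k \<Longrightarrow> (\<Sum>q'\<in>Q (k - 1). g k q q') = 1"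
    and col_sum: "k \<ge> 1 \<Longrightarrow> q' \<in> Q (k - 1) \<Longrightarrow>
                  (\<Sum>q\<in>Q k. g k q q') = real (card (Q k)) / real (card (Q (k - 1)))"
begin

lemma row_sum_Suc: "q \<in> Q (Suc k) \<Longrightarrow> (\<Sum>q'\<in>Q k. g (Suc k) q q') = 1"
  using row_sum[of "Suc k"] by simp

lemma col_sum_Suc: "q' \<in> Q k \<Longrightarrow> (\<Sum>q\<in>Q (Suc k). g (Suc k) q q') = growth Q k"
  using col_sum[of "Suc k"] by (simp add: growth_def)

lemma sum_descending_chain_pinned:
  assumes "m < n" and r: "r \<in> Q (n - 1 - m)"
  shows "(\<Sum>R\<in>PiE {..<n} (\<lambda>i. Q (n - 1 - i)).
            if R m = r then chain_weight (\<lambda>i. g (n - i - 1)) (n - 1) R else 0)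
         = (\<Prod>i<m. growth Q (n - 2 - i))"
proof -
  have index_shift: "n - 1 - i = Suc (n - 2 - i)" "n - i - 1 = Suc (n - 2 - i)" "n - 1 - Suc i = n - 2 - i"
    if "i < n - 1" for i
    using that by auto
  have "(\<Sum>R\<in>PiE {..<Suc (n - 1)} (\<lambda>i. Q (n - 1 - i)).
            if R m = r then chain_weight (\<lambda>i. g (n - i - 1)) (n - 1) R else 0)
         = (\<Prod>i<m. growth Q (n - 2 - i)) * (\<Prod>i\<in>{m..<n - 1}. 1)"
  proof (rule sum_chain_weight_pinned)
    show "(\<Sum>x\<in>Q (n - 1 - i). g (n - i - 1) x y) = growth Q (n - 2 - i)"
      if "i < m" "y \<in> Q (n - 1 - Suc i)" for i y
      using that \<open>m < n\<close> index_shift[of i] by (simp add: col_sum_Suc)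
    show "(\<Sum>y\<in>Q (n - 1 - Suc i). g (n - i - 1) x y) = 1"
      if "m \<le> i" "i < n - 1" "x \<in> Q (n - 1 - i)" for i x
      using that index_shift[of i] by (simp add: row_sum_Suc)
  qed (use assms finite_Q in auto)
  then show ?thesis
    using \<open>m < n\<close> by (simp add: Suc_diff_1)
qed

lemma sum_ascending_chain_pinned:
  assumes "a < n" and l: "l \<in> Q a"
  shows "(\<Sum>L\<in>PiE {..<n} Q.
            if L a = l then chain_weight (\<lambda>i x y. g (Suc i) y x) (n - 1) L else 0)
         = (\<Prod>i\<in>{a..<n - 1}. growth Q i)"
proof -
  have "(\<Sum>L\<in>PiE {..<Suc (n - 1)} Q.
            if L a = l then chain_weight (\<lambda>i x y. g (Suc i) y x) (n - 1) L else 0)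
         = (\<Prod>i<a. 1) * (\<Prod>i\<in>{a..<n - 1}. growth Q i)"
    by (rule sum_chain_weight_pinned)
      (use assms finite_Q row_sum_Suc col_sum_Suc in auto)
  then show ?thesis
    using \<open>a < n\<close> by (simp add: Suc_diff_1)
qed

lemma sum_Pweight:
  assumes "n \<ge> 1" and LR: "(L, R) \<in> seq_space Q n"
  shows "(\<Sum>q\<in>Q n. \<Sum>q'\<in>Q (n - 1). Pweight g n q q' (L, R))
         = growth Q (n - 1) * chain_weight (\<lambda>i. g (n - i - 1)) (n - 1) R
             * chain_weight (\<lambda>i x y. g (Suc i) y x) (n - 1) L"
proof -
  define X where "X = chain_weight (\<lambda>i. g (n - i - 1)) (n - 1) R
                       * chain_weight (\<lambda>i x y. g (Suc i) y x) (n - 1) L"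
  have n: "n = Suc (n - 1)"
    using \<open>n \<ge> 1\<close> by simp
  have "L (n - 1) \<in> Q (n - 1)" "R 0 \<in> Q (n - 1)"
    using LR \<open>n \<ge> 1\<close> by (auto simp: seq_space_def PiE_iff)
  then have "(\<Sum>q'\<in>Q (n - 1). Pweight g n q q' (L, R)) = g n q (R 0) * X" for q
    by (simp add: Pweight_eq_chain_weights X_def finite_Q sum_distrib_left [symmetric]
        sum_distrib_right [symmetric] mult.assoc)
  then have "(\<Sum>q\<in>Q n. \<Sum>q'\<in>Q (n - 1). Pweight g n q q' (L, R)) = (\<Sum>q\<in>Q n. g n q (R 0)) * X"
    by (simp add: sum_distrib_right)
  also have "(\<Sum>q\<in>Q n. g n q (R 0)) = growth Q (n - 1)"
    using col_sum_Suc[OF \<open>R 0 \<in> Q (n - 1)\<close>] n by simp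
  finally show ?thesis
    by (simp add: X_def mult.assoc)
qed

lemma sum_Pmeas_pinned:
  assumes "n \<ge> 1"
  shows "(\<Sum>q\<in>Q n. \<Sum>q'\<in>Q (n - 1). Pmeas Q g n q q' {(L, R). L a = l \<and> R m = r})
         = growth Q (n - 1)
           * (\<Sum>R\<in>PiE {..<n} (\<lambda>i. Q (n - 1 - i)).
                if R m = r then chain_weight (\<lambda>i. g (n - i - 1)) (n - 1) R else 0)
           * (\<Sum>L\<in>PiE {..<n} Q.
                if L a = l then chain_weight (\<lambda>i x y. g (Suc i) y x) (n - 1) L else 0)"
proof -
  define E where "E = {(L, R). L a = l \<and> R m = r}"
  have fin: "finite (seq_space Q n)"
    by (simp add: seq_space_def finite_PiE finite_Q)
  have "(\<Sum>q\<in>Q n. \<Sum>q'\<in>Q (n - 1). Pmeas Q g n q q' E)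
      = (\<Sum>q\<in>Q n. \<Sum>q'\<in>Q (n - 1). \<Sum>LR\<in>seq_space Q n. if LR \<in> E then Pweight g n q q' LR else 0)"
    by (simp add: Pmeas_def sum.inter_restrict fin)
  also have "\<dots> = (\<Sum>LR\<in>seq_space Q n. if LR \<in> E then
                    (\<Sum>q\<in>Q n. \<Sum>q'\<in>Q (n - 1). Pweight g n q q' LR) else 0)"
    by (simp add: sum.swap[of _ "seq_space Q n"] sum.swap[of _ "Q (n - 1)"])
      (intro sum.cong refl, auto)
  also have "\<dots> = (\<Sum>(L, R)\<in>seq_space Q n. growth Q (n - 1)
        * (if R m = r then chain_weight (\<lambda>i. g (n - i - 1)) (n - 1) R else 0)
        * (if L a = l then chain_weight (\<lambda>i x y. g (Suc i) y x) (n - 1) L else 0))"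
  proof (intro sum.cong refl, clarify)
    fix L R assume "(L, R) \<in> seq_space Q n"
    from sum_Pweight[OF assms this] show "(if (L, R) \<in> E then
        (\<Sum>q\<in>Q n. \<Sum>q'\<in>Q (n - 1). Pweight g n q q' (L, R)) else 0) = growth Q (n - 1)
        * (if R m = r then chain_weight (\<lambda>i. g (n - i - 1)) (n - 1) R else 0)
        * (if L a = l then chain_weight (\<lambda>i x y. g (Suc i) y x) (n - 1) L else 0)"
      by (simp add: E_def)
  qed
  finally show ?thesis
    by (simp add: E_def seq_space_def sum.cartesian_product [symmetric] sum_distrib_left
        sum_distrib_right sum.swap[of _ "PiE {..<n} Q"] mult.assoc mult.left_commute)
qed

lemma sum_Pmeas_pinned_eq_growth_prod:
  assumes "a < n" "m < n" "l \<in> Q a" "r \<in> Q (n - 1 - m)"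
  shows "(\<Sum>q\<in>Q n. \<Sum>q'\<in>Q (n - 1). Pmeas Q g n q q' {(L, R). L a = l \<and> R m = r})
         = growth Q (n - 1) * (\<Prod>i<m. growth Q (n - 2 - i)) * (\<Prod>i\<in>{a..<n - 1}. growth Q i)"
proof -
  have "n \<ge> 1"
    using assms by simp
  show ?thesis
    unfolding sum_Pmeas_pinned[OF \<open>n \<ge> 1\<close>] sum_descending_chain_pinned[OF assms(2,4)]
      sum_ascending_chain_pinned[OF assms(1,3)] ..
qed

end

definition quad_count :: "nat \<Rightarrow> real" where
  "quad_count k = 2 * 3 ^ k * fact (2 * k) / (fact k * fact (k + 2))"

lemma quad_count_pos: "quad_count k > 0"
  by (simp add: quad_count_def)

lemma quad_count_Suc: "quad_count (Suc k) = 6 * (2 * real k + 1) / (real k + 3) * quad_count k"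
proof -
  define A C D where "A = real k + 1" and "C = real k + 3" and "D = 2 * real k + 1"
  define F G H where "F = (fact k :: real)" and "G = (fact (2 * k) :: real)"
    and "H = (fact (k + 2) :: real)"
  have fact_2Suc: "fact (2 * Suc k) = 2 * A * D * G"
    by (simp add: A_def D_def G_def algebra_simps)
  have fact_Suc2: "fact (Suc k + 2) = C * H"
    by (simp add: C_def H_def numeral_eq_Suc algebra_simps)
  have fact_Suc: "fact (Suc k) = A * F"
    by (simp add: A_def F_def)
  have pos: "A > 0" "C > 0" "F > 0" "H > 0"
    by (simp_all add: A_def C_def F_def H_def)
  have "quad_count (Suc k) = 2 * (3 * 3 ^ k) * (2 * A * D * G) / ((A * F) * (C * H))"
    unfolding quad_count_def fact_2Suc fact_Suc2 fact_Suc power_Suc ..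
  also have "\<dots> = 6 * D / C * (2 * 3 ^ k * G / (F * H))"
    using pos by (simp add: field_simps)
  also have "\<dots> = 6 * (2 * real k + 1) / (real k + 3) * quad_count k"
    by (simp add: quad_count_def C_def D_def F_def G_def H_def)
  finally show ?thesis .
qed

lemma quad_count_Suc_le: "quad_count (Suc k) \<le> 12 * quad_count k"
proof -
  have "6 * (2 * real k + 1) / (k + 3) \<le> 12"
    by (simp add: divide_le_eq)
  then show ?thesis
    unfolding quad_count_Suc using quad_count_pos[of k] by (intro mult_right_mono) auto
qed

lemma growth_bounds:
  assumes "\<And>k. real (card (Q k)) = quad_count k"
  shows "0 \<le> growth Q k" and "growth Q k \<le> 12"
  using quad_count_pos[of k] quad_count_pos[of "Suc k"] quad_count_Suc_le[of k]
  by (simp_all add: growth_def assms divide_le_eq less_imp_le)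

lemma prod_growth_le:
  assumes "\<And>k. real (card (Q k)) = quad_count k"
  shows "(\<Prod>i\<in>I. growth Q (h i)) \<le> 12 ^ card I"
  using growth_bounds[OF assms] by (intro prod_le_power) auto

theorem lemma6p1:
  fixes Q :: "nat \<Rightarrow> 'm set" and g :: "nat \<Rightarrow> 'm \<Rightarrow> 'm \<Rightarrow> real"
    and n a b :: nat and l r :: 'm
  assumes finQ: "\<And>k. finite (Q k)"
    and cardQ: "\<And>k. real (card (Q k)) = 2 * 3 ^ k * fact (2 * k) / (fact k * fact (k + 2))"
    and g_nonneg: "\<And>k q q'. k \<ge> 1 \<Longrightarrow> q \<in> Q k \<Longrightarrow> q' \<in> Q (k - 1) \<Longrightarrow> g k q q' \<ge> 0"
    and g_row: "\<And>k q. k \<ge> 1 \<Longrightarrow> q \<in> Q k \<Longrightarrow> (\<Sum>q'\<in>Q (k - 1). g k q q') = 1"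
    and g_col: "\<And>k q'. k \<ge> 1 \<Longrightarrow> q' \<in> Q (k - 1) \<Longrightarrow>
                 (\<Sum>q\<in>Q k. g k q q') = real (card (Q k)) / real (card (Q (k - 1)))"
    and n2: "n \<ge> 2" and apos: "a > 0" and bpos: "b > 0"
    and an: "a < n - 1" and bn: "b < n"
    and l: "l \<in> Q a" and r: "r \<in> Q b"
  shows "(\<Sum>q\<in>Q n. \<Sum>q'\<in>Q (n - 1).
            Pmeas Q g n q q' {(L, R). L a = l \<and> R (n - b - 1) = r})
         \<le> 12 ^ (2 * n - b - a - 1)"
proof -
  interpret transition_kernel Q g
    using finQ g_row g_col by unfold_locales
  have card_Q: "real (card (Q k)) = quad_count k" for k
    using cardQ by (simp add: quad_count_def)
  define m where "m = n - b - 1"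
  have "(\<Sum>q\<in>Q n. \<Sum>q'\<in>Q (n - 1). Pmeas Q g n q q' {(L, R). L a = l \<and> R m = r})
      = growth Q (n - 1) * (\<Prod>i<m. growth Q (n - 2 - i)) * (\<Prod>i\<in>{a..<n - 1}. growth Q i)"
    using an bn l r by (intro sum_Pmeas_pinned_eq_growth_prod) (auto simp: m_def)
  also have "\<dots> \<le> 12 * 12 ^ m * 12 ^ (n - 1 - a)"
    using growth_bounds[OF card_Q] prod_growth_le[OF card_Q, where I = "{..<m}"]
      prod_growth_le[OF card_Q, where I = "{a..<n - 1}" and h = id]
    by (intro mult_mono prod_nonneg) auto
  also have "\<dots> = 12 ^ (2 * n - b - a - 1)"
  proof -
    have "Suc (m + (n - 1 - a)) = 2 * n - b - a - 1"
      using an bn by (simp add: m_def)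
    then show ?thesis
      by (metis power_add power_Suc mult.assoc)
  qed
  finally show ?thesis
    by (simp add: m_def)
qed

end
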